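(* Let $\mathcal{H}$ be a Hilbert space, $H$ self-adjoint on $\mathcal{H}$, and $u:\mathbb{R}^+\to\mathcal{H}$ with $\sup_{t\ge0}\|u(t)\|<\infty$ and $u\in C^1(\mathbb{R}^+,\mathcal{H})\cap C^0(\mathbb{R}^+,{\rm Dom}\,H)$; set $r(t)=\partial_tu(t)+iHu(t)$. Let $t\mapsto M(t)\in B(\mathcal{H})$ have a bounded Heisenberg derivative $\mathcal{D}M(t)$ and suppose: (i) $\sup_t\|M(t)\|<\infty$ and $\|M(\cdot)r(\cdot)\|,\|M^*(\cdot)r(\cdot)\|\in L^1(\mathbb{R}^+,dt)$; (ii) $\mathcal{D}M(t)\ge B^*(t)B(t)-\sum_{j=1}^nC_j^*(t)C_j(t)$ with $B(t),C_j(t)\in B(\mathcal{H})$ and $\int_{\mathbb{R}^+}\|C_j(t)u(t)\|^2dt<\infty$ for each $j$. Then $\int_0^{+\infty}\|B(t)u(t)\|^2dt<\infty$.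
   Context: The Heisenberg derivative is $\mathcal{D}M(t)=\partial_tM(t)+[H,iM(t)]$, where $[H,iM(t)]$, defined as a quadratic form on ${\rm Dom}\,H$, is assumed to extend to a bounded operator. The inequality in (ii) is in the sense of quadratic forms. *)

theory Defs
  imports "HOL-Analysis.Analysis"
begin

text \<open>Convention: the inner product is antilinear in the first and linear in the
  second argument (physics convention).\<close>

class complex_inner = real_normed_vector +
  fixes scaleC :: "complex \<Rightarrow> 'a \<Rightarrow> 'a" (infixr \<open>*\<^sub>C\<close> 75)
    and cinner :: "'a \<Rightarrow> 'a \<Rightarrow> complex"
  assumes scaleC_add_right: "a *\<^sub>C (x + y) = a *\<^sub>C x + a *\<^sub>C y"
    and scaleC_add_left: "(a + b) *\<^sub>C x = a *\<^sub>C x + b *\<^sub>C x"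
    and scaleC_scaleC: "a *\<^sub>C (b *\<^sub>C x) = (a * b) *\<^sub>C x"
    and scaleC_one: "1 *\<^sub>C x = x"
    and scaleR_scaleC: "r *\<^sub>R x = complex_of_real r *\<^sub>C x"
    and cinner_cnj_commute: "cinner x y = cnj (cinner y x)"
    and cinner_add_right: "cinner x (y + z) = cinner x y + cinner x z"
    and cinner_scaleC_right: "cinner x (a *\<^sub>C y) = a * cinner x y"
    and cinner_eq_zero_iff: "cinner x x = 0 \<longleftrightarrow> x = 0"
    and norm_eq_sqrt_cinner: "norm x = sqrt (Re (cinner x x))"

class chilbert_space = complex_inner + complete_space

definition clinear_on :: "'a::complex_inner set \<Rightarrow> ('a \<Rightarrow> 'b::complex_inner) \<Rightarrow> bool" where
  "clinear_on S f \<longleftrightarrow>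
     (\<forall>x\<in>S. \<forall>y\<in>S. f (x + y) = f x + f y) \<and> (\<forall>c. \<forall>x\<in>S. f (c *\<^sub>C x) = c *\<^sub>C f x)"

definition bounded_clinear :: "('a::complex_inner \<Rightarrow> 'b::complex_inner) \<Rightarrow> bool" where
  "bounded_clinear f \<longleftrightarrow> clinear_on UNIV f \<and> (\<exists>K. \<forall>x. norm (f x) \<le> K * norm x)"

definition csubspace :: "'a::complex_inner set \<Rightarrow> bool" where
  "csubspace S \<longleftrightarrow> 0 \<in> S \<and> (\<forall>x\<in>S. \<forall>y\<in>S. x + y \<in> S) \<and> (\<forall>c. \<forall>x\<in>S. c *\<^sub>C x \<in> S)"

text \<open>A (possibly unbounded) self-adjoint operator with domain D and action A:
  D is a dense subspace, A is linear on D, and the adjoint of A equals A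
  (same domain, same action): y is in the domain of the adjoint with
  A^* y = z iff  <A x, y> = <x, z> for all x in D.\<close>
definition self_adjoint_op :: "'a::complex_inner set \<Rightarrow> ('a \<Rightarrow> 'a) \<Rightarrow> bool" where
  "self_adjoint_op D A \<longleftrightarrow>
     csubspace D \<and> closure D = UNIV \<and> clinear_on D A \<and>
     (\<forall>y z. (\<forall>x\<in>D. cinner (A x) y = cinner x z) \<longleftrightarrow> (y \<in> D \<and> z = A y))"


text \<open>Sanity check that the class is satisfiable: the complex numbers form a
  complex Hilbert space.\<close>
instantiation complex :: chilbert_space
begin
definition scaleC_complex :: "complex \<Rightarrow> complex \<Rightarrow> complex" where
  "scaleC_complex a x = a * x"
definition cinner_complex :: "complex \<Rightarrow> complex \<Rightarrow> complex" where
  "cinner_complex x y = cnj x * y"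
instance
proof
  fix x :: complex
  show "norm x = sqrt (Re (cinner x x))"
    by (simp add: cinner_complex_def complex_mult_cnj cmod_def power2_eq_square)
qed (auto simp: scaleC_complex_def cinner_complex_def algebra_simps scaleR_conv_of_real)
end

end

theory Submission
  imports Defs
begin

text \<open>Let \<open>g(t) = Re \<langle>u(t), M(t) u(t)\<rangle>\<close>, which is bounded since \<open>u\<close> and \<open>M\<close> are.
  Differentiating and substituting \<open>\<partial>\<^sub>t u = r - iHu\<close>, the terms involving \<open>H\<close> combine
  into the Heisenberg derivative, so that
  \<open>g' = Re \<langle>u, \<D>M u\<rangle> + Re \<langle>r, M u\<rangle> + Re \<langle>u, M r\<rangle>\<close>.
  The lower bound on \<open>\<D>M\<close> and Cauchy-Schwarz give
  \<open>\<parallel>B u\<parallel>\<^sup>2 \<le> g' + \<Sum>\<^sub>j \<parallel>C\<^sub>j u\<parallel>\<^sup>2 + sup \<parallel>u\<parallel> (\<parallel>M r\<parallel> + \<parallel>M\<^sup>* r\<parallel>)\<close>, whose integral over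
  \<open>[0, k]\<close> is bounded independently of \<open>k\<close>.\<close>

lemma cinner_add_left: "cinner (x + y) (z::'a::complex_inner) = cinner x z + cinner y z"
  by (metis cinner_cnj_commute cinner_add_right complex_cnj_add)

lemma cinner_scaleC_left: "cinner (a *\<^sub>C x) (y::'a::complex_inner) = cnj a * cinner x y"
  by (metis cinner_cnj_commute cinner_scaleC_right complex_cnj_mult)

lemma cinner_minus_right: "cinner x (- y::'a::complex_inner) = - cinner x y"
  using cinner_add_right[of x y "-y"] cinner_add_right[of x 0 0] by (simp add: add_eq_0_iff)

lemma cinner_minus_left: "cinner (- x::'a::complex_inner) y = - cinner x y"
  by (metis cinner_cnj_commute cinner_minus_right complex_cnj_minus)

lemma cinner_diff_right: "cinner x (y - z::'a::complex_inner) = cinner x y - cinner x z"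
  using cinner_add_right[of x y "-z"] by (simp add: cinner_minus_right)

lemma cinner_diff_left: "cinner (y - z::'a::complex_inner) x = cinner y x - cinner z x"
  using cinner_add_left[of y "-z" x] by (simp add: cinner_minus_left)

lemma cinner_scaleR_right: "cinner x (c *\<^sub>R y::'a::complex_inner) = complex_of_real c * cinner x y"
  by (simp add: scaleR_scaleC cinner_scaleC_right)

lemma cinner_scaleR_left: "cinner (c *\<^sub>R x::'a::complex_inner) y = complex_of_real c * cinner x y"
  by (simp add: scaleR_scaleC cinner_scaleC_left)

lemma Re_cinner_self: "Re (cinner x (x::'a::complex_inner)) = (norm x)\<^sup>2"
  by (metis norm_eq_sqrt_cinner norm_ge_zero real_sqrt_ge_0_iff real_sqrt_pow2)

lemma Re_cinner_commute: "Re (cinner x (y::'a::complex_inner)) = Re (cinner y x)"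
  by (subst cinner_cnj_commute) simp

lemma abs_Re_cinner_le: "\<bar>Re (cinner x (y::'a::complex_inner))\<bar> \<le> norm x * norm y"
proof (cases "y = 0")
  case True
  then show ?thesis
    using cinner_scaleR_right[of x 0 y] by simp
next
  case False
  define R where "R = Re (cinner x y)"
  have ny: "norm y > 0"
    using False by simp
  \<comment> \<open>expand \<open>0 \<le> \<parallel>x - t y\<parallel>\<^sup>2\<close> at the minimizing \<open>t = R / \<parallel>y\<parallel>\<^sup>2\<close>\<close>
  have "0 \<le> (norm (x - (R / (norm y)\<^sup>2) *\<^sub>R y))\<^sup>2"
    by simp
  also have "\<dots> = (norm x)\<^sup>2 - R\<^sup>2 / (norm y)\<^sup>2"
    unfolding Re_cinner_self[symmetric] using ny
    by (simp add: cinner_diff_left cinner_diff_right cinner_scaleR_left cinner_scaleR_right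
        R_def Re_cinner_commute[of y x] power2_eq_square field_simps)
  finally have "R\<^sup>2 \<le> (norm x * norm y)\<^sup>2"
    using ny by (simp add: field_simps power_mult_distrib)
  then show ?thesis
    using abs_le_square_iff[of R "norm x * norm y"] by (simp add: R_def)
qed

lemma bounded_bilinear_Re_cinner:
  "bounded_bilinear (\<lambda>x y::'a::complex_inner. Re (cinner x y))"
proof
  show "\<exists>K. \<forall>a b::'a. norm (Re (cinner a b)) \<le> norm a * norm b * K"
    by (rule exI[of _ 1]) (simp add: abs_Re_cinner_le)
qed (simp_all add: cinner_add_left cinner_add_right cinner_scaleR_left cinner_scaleR_right)

lemma bounded_clinear_add: "bounded_clinear f \<Longrightarrow> f (x + y) = f x + f y"
  by (simp add: bounded_clinear_def clinear_on_def)

lemma bounded_clinear_scaleC: "bounded_clinear f \<Longrightarrow> f (c *\<^sub>C x) = c *\<^sub>C f x"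
  by (simp add: bounded_clinear_def clinear_on_def)

lemma bounded_clinear_scaleR: "bounded_clinear f \<Longrightarrow> f (c *\<^sub>R x) = c *\<^sub>R f x"
  by (simp add: scaleR_scaleC bounded_clinear_scaleC)

lemma bounded_clinear_diff: "bounded_clinear f \<Longrightarrow> f (x - y) = f x - f y"
  using bounded_clinear_scaleR[of f "-1" y] bounded_clinear_add[of f x "-y"] by simp

lemma has_vector_derivative_operator_apply:
  fixes M :: "real \<Rightarrow> 'a::complex_inner \<Rightarrow> 'a" and u :: "real \<Rightarrow> 'a"
  assumes t: "t \<in> S"
    and lin: "\<And>s. s \<in> S \<Longrightarrow> bounded_clinear (M s)"
    and unif: "\<And>s x. s \<in> S \<Longrightarrow> norm (M s x) \<le> K * norm x"
    and M': "\<And>x. ((\<lambda>s. M s x) has_vector_derivative M' x) (at t within S)"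
    and u': "(u has_vector_derivative u') (at t within S)"
  shows "((\<lambda>s. M s (u s)) has_vector_derivative M' (u t) + M t u') (at t within S)"
proof -
  define e1 where "e1 s = (1 / norm (s - t)) *\<^sub>R (M s (u t) - (M t (u t) + (s - t) *\<^sub>R M' (u t)))" for s
  define e2 where "e2 s = (1 / norm (s - t)) *\<^sub>R (u s - (u t + (s - t) *\<^sub>R u'))" for s
  define e3 where "e3 s = M s u' - M t u'" for s
  have "(e1 \<longlongrightarrow> 0) (at t within S)"
    using M'[of "u t"] unfolding has_vector_derivative_def has_derivative_within e1_def by simp
  moreover have "(e2 \<longlongrightarrow> 0) (at t within S)"
    using u' unfolding has_vector_derivative_def has_derivative_within e2_def by simp
  moreover have "(e3 \<longlongrightarrow> 0) (at t within S)"
    using M'[of u'] has_vector_derivative_continuous[of "\<lambda>s. M s u'"]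
    unfolding e3_def continuous_within by (simp add: Lim_null[symmetric])
  ultimately have lim: "((\<lambda>s. norm (e1 s) + K * norm (e2 s) + norm (e3 s)) \<longlongrightarrow> 0) (at t within S)"
    by (auto intro!: tendsto_add_zero tendsto_mult_right_zero tendsto_norm_zero)
  have "norm ((1 / norm (s - t)) *\<^sub>R (M s (u s) - (M t (u t) + (s - t) *\<^sub>R (M' (u t) + M t u'))))
      \<le> norm (e1 s) + K * norm (e2 s) + norm (e3 s)" if s: "s \<in> S" for s
  proof -
    have L: "bounded_clinear (M s)"
      using lin s by simp
    have "(1 / norm (s - t)) *\<^sub>R (M s (u s) - (M t (u t) + (s - t) *\<^sub>R (M' (u t) + M t u')))
       = e1 s + M s (e2 s) + sgn (s - t) *\<^sub>R e3 s"
      by (simp add: e1_def e2_def e3_def sgn_div_norm bounded_clinear_scaleR[OF L]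
          bounded_clinear_diff[OF L] bounded_clinear_add[OF L] algebra_simps divide_inverse)
    also have "norm \<dots> \<le> norm (e1 s) + norm (M s (e2 s)) + norm (sgn (s - t) *\<^sub>R e3 s)"
      by (meson norm_triangle_ineq add_mono order_trans order_refl)
    also have "\<dots> \<le> norm (e1 s) + K * norm (e2 s) + norm (e3 s)"
      using unif[OF s, of "e2 s"] by (auto simp: sgn_real_def e3_def)
    finally show ?thesis .
  qed
  then have "eventually (\<lambda>s. norm ((1 / norm (s - t)) *\<^sub>R (M s (u s) - (M t (u t) + (s - t) *\<^sub>R (M' (u t) + M t u'))))
      \<le> norm (e1 s) + K * norm (e2 s) + norm (e3 s)) (at t within S)"
    by (auto simp: eventually_at_filter)
  then show ?thesis
    unfolding has_vector_derivative_def has_derivative_within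
    by (auto intro: bounded_linear_scaleR_left Lim_null_comparison[OF _ lim])
qed

lemma has_vector_derivative_Re_cinner_operator_apply:
  fixes M :: "real \<Rightarrow> 'a::complex_inner \<Rightarrow> 'a" and u :: "real \<Rightarrow> 'a"
  assumes "t \<in> S"
    and "\<And>s. s \<in> S \<Longrightarrow> bounded_clinear (M s)"
    and "\<And>s x. s \<in> S \<Longrightarrow> norm (M s x) \<le> K * norm x"
    and "\<And>x. ((\<lambda>s. M s x) has_vector_derivative M' x) (at t within S)"
    and u': "(u has_vector_derivative u') (at t within S)"
  shows "((\<lambda>s. Re (cinner (u s) (M s (u s)))) has_vector_derivative
           Re (cinner (u t) (M' (u t) + M t u')) + Re (cinner u' (M t (u t)))) (at t within S)"
  using bounded_bilinear.has_vector_derivative[OF bounded_bilinear_Re_cinner u'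
      has_vector_derivative_operator_apply[OF assms]]
  by simp

lemma abs_Re_cinner_apply_le:
  assumes "\<And>x. norm (M x) \<le> K * norm x" and "norm v \<le> U"
  shows "\<bar>Re (cinner v (M v))\<bar> \<le> \<bar>K\<bar> * U\<^sup>2"
proof -
  have "\<bar>Re (cinner v (M v))\<bar> \<le> norm v * norm (M v)"
    by (rule abs_Re_cinner_le)
  also have "\<dots> \<le> U * (\<bar>K\<bar> * U)"
  proof (rule mult_mono)
    have "norm (M v) \<le> K * norm v"
      by (rule assms(1))
    also have "\<dots> \<le> \<bar>K\<bar> * U"
      using assms(2) by (intro mult_mono) auto
    finally show "norm (M v) \<le> \<bar>K\<bar> * U" .
    show "0 \<le> U"
      using assms(2) norm_ge_zero order_trans by blast
  qed (use assms(2) in auto)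
  finally show ?thesis
    by (simp add: power2_eq_square mult_ac)
qed

text \<open>Pointwise form of the estimate, at a fixed time: \<open>v = u(t)\<close>, \<open>w = H u(t)\<close>,
  \<open>u'(t) = r - i w\<close>, \<open>d = \<partial>\<^sub>t M(t) v\<close> and \<open>e = \<D>M(t) v\<close>.\<close>

lemma heisenberg_energy_lower_bound:
  fixes M Mstar :: "'a::complex_inner \<Rightarrow> 'a"
  assumes M: "bounded_clinear M"
    and adj: "\<And>x y. cinner (M x) y = cinner x (Mstar y)"
    and heis: "cinner v e = cinner v d + (cinner w (\<i> *\<^sub>C M v) - cinner v (\<i> *\<^sub>C M w))"
    and lower: "b \<le> Re (cinner v e)"
    and v: "norm v \<le> U"
  shows "b \<le> Re (cinner v (d + M (r - \<i> *\<^sub>C w))) + Re (cinner (r - \<i> *\<^sub>C w) (M v))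
              + U * norm (M r) + U * norm (Mstar r)"
proof -
  have "Re (cinner v (d + M (r - \<i> *\<^sub>C w))) + Re (cinner (r - \<i> *\<^sub>C w) (M v))
      = Re (cinner v e) + Re (cinner v (Mstar r)) + Re (cinner v (M r))"
    using arg_cong[OF heis, of Re]
    by (simp add: bounded_clinear_diff[OF M] bounded_clinear_scaleC[OF M] adj[symmetric]
        cinner_add_right cinner_diff_left cinner_diff_right cinner_scaleC_left cinner_scaleC_right
        Re_cinner_commute[of r])
  moreover have "\<bar>Re (cinner v (Mstar r))\<bar> \<le> U * norm (Mstar r)"
    using abs_Re_cinner_le[of v "Mstar r"] v by (meson mult_right_mono norm_ge_zero order_trans)
  moreover have "\<bar>Re (cinner v (M r))\<bar> \<le> U * norm (M r)"
    using abs_Re_cinner_le[of v "M r"] v by (meson mult_right_mono norm_ge_zero order_trans)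
  ultimately show ?thesis
    using lower by linarith
qed

lemma integrable_on_atLeast_if_bounded_integrals:
  fixes h :: "real \<Rightarrow> real"
  assumes nonneg: "\<And>t. a \<le> t \<Longrightarrow> 0 \<le> h t"
    and int: "\<And>k. a \<le> k \<Longrightarrow> h integrable_on {a..k}"
    and bound: "\<And>k. a \<le> k \<Longrightarrow> integral {a..k} h \<le> I"
  shows "h integrable_on {a..}"
proof -
  define f where "f n t = (if t \<in> {a..a + real n} then h t else 0)" for n t
  have f: "(f n has_integral integral {a..a + real n} h) {a..}" for n
    unfolding f_def by (subst has_integral_restrict) (use int in auto)
  have "h integrable_on {a..} \<and> (\<lambda>n. integral {a..} (f n)) \<longlonglongrightarrow> integral {a..} h"
  proof (rule monotone_convergence_increasing)
    show "f n integrable_on {a..}" for n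
      using f by blast
    show "f n t \<le> f (Suc n) t" if "t \<in> {a..}" for n t
      using that nonneg[of t] by (auto simp: f_def)
    show "(\<lambda>n. f n t) \<longlonglongrightarrow> h t" if "t \<in> {a..}" for t
    proof (rule tendsto_eventually)
      obtain N where "t - a \<le> real N"
        using real_arch_simple by blast
      then show "\<forall>\<^sub>F n in sequentially. f n t = h t"
        using that by (auto simp: f_def eventually_sequentially intro!: exI[of _ N])
    qed
    have "0 \<le> integral {a..} (f n) \<and> integral {a..} (f n) \<le> I" for n
      using f[of n] bound[of "a + real n"] integral_nonneg[OF int nonneg, of "a + real n"]
      by (simp add: integral_unique)
    then show "bounded (range (\<lambda>n. integral {a..} (f n)))"
      unfolding bounded_iff by (intro exI[of _ I]) auto
  qed
  then show ?thesis ..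
qed

lemma nn_integral_atLeast_lt_top_if_le_deriv_plus_integrable:
  fixes f g g' F :: "real \<Rightarrow> real"
  assumes f: "\<And>t. a \<le> t \<Longrightarrow> 0 \<le> f t \<and> f t \<le> g' t + F t"
    and g': "\<And>t. a \<le> t \<Longrightarrow> (g has_vector_derivative g' t) (at t within {a..})"
    and g: "\<And>t. a \<le> t \<Longrightarrow> \<bar>g t\<bar> \<le> G"
    and F: "F integrable_on {a..}" "\<And>t. a \<le> t \<Longrightarrow> 0 \<le> F t"
  shows "(\<integral>\<^sup>+ t\<in>{a..}. ennreal (f t) \<partial>lborel) < \<infinity>"
proof -
  define h where "h t = g' t + F t" for t
  have h: "(h has_integral g k - g a + integral {a..k} F) {a..k}" if "a \<le> k" for k
    unfolding h_def
  proof (rule has_integral_add)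
    show "(g' has_integral g k - g a) {a..k}"
      using that g' by (intro fundamental_theorem_of_calculus)
        (auto intro: has_vector_derivative_within_subset[of g _ _ "{a..}"])
    show "(F has_integral integral {a..k} F) {a..k}"
      using F(1) integrable_on_subinterval[of F "{a..}" a k] by auto
  qed
  have bound: "g k - g a + integral {a..k} F \<le> 2 * G + integral {a..} F" if "a \<le> k" for k
  proof -
    have "integral {a..k} F \<le> integral {a..} F"
      using F integrable_on_subinterval[of F "{a..}" a k] by (intro integral_subset_le) auto
    moreover have "g k - g a \<le> 2 * G"
      using g[of k] g[of a] that by linarith
    ultimately show ?thesis by linarith
  qed
  have h_nonneg: "0 \<le> h t" if "a \<le> t" for t
    using f[OF that] by (simp add: h_def)
  have "h integrable_on {a..}"
  proof (rule integrable_on_atLeast_if_bounded_integrals[OF h_nonneg])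
    show "h integrable_on {a..k}" if "a \<le> k" for k
      using h[OF that] by blast
    show "integral {a..k} h \<le> 2 * G + integral {a..} F" if "a \<le> k" for k
      using bound[OF that] integral_unique[OF h[OF that]] by simp
  qed
  then have "(\<integral>\<^sup>+ t. ennreal (indicator {a..} t * h t) \<partial>lborel) = ennreal (integral {a..} h)"
    by (intro nn_integral_has_integral_lebesgue integrable_integral)
      (use h_nonneg in auto)
  moreover have "(\<integral>\<^sup>+ t\<in>{a..}. ennreal (f t) \<partial>lborel) \<le> (\<integral>\<^sup>+ t. ennreal (indicator {a..} t * h t) \<partial>lborel)"
    using f by (intro nn_integral_mono) (auto simp: indicator_def h_def intro: ennreal_leI)
  ultimately show ?thesis
    by (simp add: order_le_less_trans)
qed

theorem lemmaA1:
  fixes D :: "'a::chilbert_space set" and Hop :: "'a \<Rightarrow> 'a"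
    and u u' :: "real \<Rightarrow> 'a"
    and M Mstar dM DM B :: "real \<Rightarrow> 'a \<Rightarrow> 'a"
    and C :: "nat \<Rightarrow> real \<Rightarrow> 'a \<Rightarrow> 'a" and n :: nat
    and r :: "real \<Rightarrow> 'a"
  defines "r \<equiv> \<lambda>t. u' t + \<i> *\<^sub>C Hop (u t)"
  assumes H_sa: "self_adjoint_op D Hop"
    and u_bdd: "bounded (u ` {0..})"
    and u_deriv: "\<forall>t\<ge>0. (u has_vector_derivative u' t) (at t within {0..})"
    and u'_cont: "continuous_on {0..} u'"
    and u_dom: "\<forall>t\<ge>0. u t \<in> D"
    and Hu_cont: "continuous_on {0..} (\<lambda>t. Hop (u t))"
    and M_bounded: "\<forall>t\<ge>0. bounded_clinear (M t)"
    and M_adj: "\<forall>t\<ge>0. \<forall>x y. cinner (M t x) y = cinner x (Mstar t y)"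
    and M_deriv: "\<forall>t\<ge>0. bounded_clinear (dM t) \<and>
                    (\<forall>x. ((\<lambda>s. M s x) has_vector_derivative dM t x) (at t within {0..}))"
    and DM_bounded: "\<forall>t\<ge>0. bounded_clinear (DM t)"
    and DM_heis: "\<forall>t\<ge>0. \<forall>\<phi>\<in>D. \<forall>\<psi>\<in>D.
        cinner \<phi> (DM t \<psi>) = cinner \<phi> (dM t \<psi>)
          + (cinner (Hop \<phi>) (\<i> *\<^sub>C M t \<psi>) - cinner \<phi> (\<i> *\<^sub>C M t (Hop \<psi>)))"
    and M_unif: "\<exists>K. \<forall>t\<ge>0. \<forall>x. norm (M t x) \<le> K * norm x"
    and Mr_L1: "set_integrable lborel {0..} (\<lambda>t. norm (M t (r t)))"
    and Mstar_r_L1: "set_integrable lborel {0..} (\<lambda>t. norm (Mstar t (r t)))"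
    and B_bounded: "\<forall>t\<ge>0. bounded_clinear (B t)"
    and C_bounded: "\<forall>j<n. \<forall>t\<ge>0. bounded_clinear (C j t)"
    and DM_lower: "\<forall>t\<ge>0. \<forall>\<phi>. Im (cinner \<phi> (DM t \<phi>)) = 0 \<and>
        Re (cinner \<phi> (DM t \<phi>)) \<ge> (norm (B t \<phi>))\<^sup>2 - (\<Sum>j<n. (norm (C j t \<phi>))\<^sup>2)"
    and C_L2: "\<forall>j<n. set_integrable lborel {0..} (\<lambda>t. (norm (C j t (u t)))\<^sup>2)"
  shows "(\<integral>\<^sup>+ t\<in>{0..}. ennreal ((norm (B t (u t)))\<^sup>2) \<partial>lborel) < \<infinity>"
proof -
  obtain U where U: "U > 0" "\<And>t. 0 \<le> t \<Longrightarrow> norm (u t) \<le> U"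
    using u_bdd unfolding bounded_pos by auto
  obtain K where K: "\<And>t x. 0 \<le> t \<Longrightarrow> norm (M t x) \<le> K * norm x"
    using M_unif by auto
  define g where "g t = Re (cinner (u t) (M t (u t)))" for t
  define g' where "g' t = Re (cinner (u t) (dM t (u t) + M t (u' t))) + Re (cinner (u' t) (M t (u t)))" for t
  define F where "F t = (\<Sum>j<n. (norm (C j t (u t)))\<^sup>2) + U * norm (M t (r t)) + U * norm (Mstar t (r t))" for t
  show ?thesis
  proof (rule nn_integral_atLeast_lt_top_if_le_deriv_plus_integrable[where g = g and g' = g' and F = F])
    show "0 \<le> (norm (B t (u t)))\<^sup>2 \<and> (norm (B t (u t)))\<^sup>2 \<le> g' t + F t" if t: "0 \<le> t" for t
    proof -
      have heis: "cinner (u t) (DM t (u t)) = cinner (u t) (dM t (u t))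
          + (cinner (Hop (u t)) (\<i> *\<^sub>C M t (u t)) - cinner (u t) (\<i> *\<^sub>C M t (Hop (u t))))"
        using DM_heis u_dom t by blast
      have "u' t = r t - \<i> *\<^sub>C Hop (u t)"
        unfolding r_def by simp
      moreover have "(norm (B t (u t)))\<^sup>2 - (\<Sum>j<n. (norm (C j t (u t)))\<^sup>2)
          \<le> Re (cinner (u t) (dM t (u t) + M t (r t - \<i> *\<^sub>C Hop (u t))))
            + Re (cinner (r t - \<i> *\<^sub>C Hop (u t)) (M t (u t)))
            + U * norm (M t (r t)) + U * norm (Mstar t (r t))"
        by (rule heisenberg_energy_lower_bound[OF _ _ heis]) (use t M_bounded M_adj DM_lower U(2) in simp_all)
      ultimately show ?thesis
        by (simp add: g'_def F_def)
    qed
    show "(g has_vector_derivative g' t) (at t within {0..})" if "0 \<le> t" for t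
      unfolding g_def g'_def using that M_bounded K M_deriv u_deriv
      by (intro has_vector_derivative_Re_cinner_operator_apply[where K = K]) auto
    show "\<bar>g t\<bar> \<le> \<bar>K\<bar> * U\<^sup>2" if "0 \<le> t" for t
      unfolding g_def using that K U(2) by (intro abs_Re_cinner_apply_le) auto
    show "F integrable_on {0..}"
      unfolding F_def
      using integrable_cmul[OF set_borel_integral_eq_integral(1)[OF Mr_L1], of U]
        integrable_cmul[OF set_borel_integral_eq_integral(1)[OF Mstar_r_L1], of U]
        set_borel_integral_eq_integral(1)[OF C_L2[rule_format]]
      by (intro integrable_add integrable_sum) simp_all
    show "0 \<le> F t" for t
      unfolding F_def using U(1) by (intro add_nonneg_nonneg sum_nonneg) auto
  qed
qed

end
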